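(* Let $\Sigma\subseteq\mathcal A^{\mathbf N}$ be a one-sided subshift over a finite alphabet $\mathcal A$ that has a finite subset $F$ with dense orbit. If the complexity function $p$ of the language of $\Sigma$ is unbounded, then this language is almost prolongable.
   Context: $\Sigma$ is closed and invariant under the shift $S$. $F\subseteq\Sigma$ has dense orbit if $\bigcup_{\omega\in F}\{S^m\omega:m\ge0\}$ is dense in $\Sigma$. The language of $\Sigma$ is the set of finite words occurring as subwords of elements of $\Sigma$; $p(n)$ is the number of its words of length $n$. A word $v$ of a language $\mathcal L$ is left-prolongable (resp. right-prolongable) if $av\in\mathcal L$ (resp. $va\in\mathcal L$) for some letter $a$; $\mathcal L$ is almost prolongable if the proportions of left-prolongable and of right-prolongable words among its words of length $n$ both tend to $1$ as $n\to\infty$. *)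

theory Defs
  imports "HOL-Analysis.Analysis"
begin

definition seq_top :: "'a set \<Rightarrow> (nat \<Rightarrow> 'a) topology" where
  "seq_top A = product_topology (\<lambda>_. discrete_topology A) UNIV"

definition shift :: "(nat \<Rightarrow> 'a) \<Rightarrow> (nat \<Rightarrow> 'a)" where
  "shift \<omega> = (\<lambda>n. \<omega> (Suc n))"

definition subshift :: "'a set \<Rightarrow> (nat \<Rightarrow> 'a) set \<Rightarrow> bool" where
  "subshift A Sig \<longleftrightarrow> finite A \<and> Sig \<subseteq> topspace (seq_top A)
     \<and> closedin (seq_top A) Sig \<and> shift ` Sig \<subseteq> Sig"

definition orbit_set :: "(nat \<Rightarrow> 'a) set \<Rightarrow> (nat \<Rightarrow> 'a) set" where
  "orbit_set F = (\<Union>\<omega>\<in>F. {(shift ^^ m) \<omega> | m. True})"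

definition has_dense_orbit :: "'a set \<Rightarrow> (nat \<Rightarrow> 'a) set \<Rightarrow> (nat \<Rightarrow> 'a) set \<Rightarrow> bool" where
  "has_dense_orbit A Sig F \<longleftrightarrow> F \<subseteq> Sig \<and>
     (subtopology (seq_top A) Sig) closure_of (orbit_set F) = Sig"

definition language :: "(nat \<Rightarrow> 'a) set \<Rightarrow> 'a list set" where
  "language Sig = {w. \<exists>\<omega>\<in>Sig. \<exists>i. w = map \<omega> [i..<i + length w]}"

definition complexity :: "'a list set \<Rightarrow> nat \<Rightarrow> nat" where
  "complexity L n = card {w\<in>L. length w = n}"

definition left_prolongable :: "'a list set \<Rightarrow> 'a list \<Rightarrow> bool" where
  "left_prolongable L v \<longleftrightarrow> (\<exists>a. a # v \<in> L)"

definition right_prolongable :: "'a list set \<Rightarrow> 'a list \<Rightarrow> bool" where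
  "right_prolongable L v \<longleftrightarrow> (\<exists>a. v @ [a] \<in> L)"

definition almost_prolongable :: "'a list set \<Rightarrow> bool" where
  "almost_prolongable L \<longleftrightarrow>
     ((\<lambda>n. real (card {v\<in>L. length v = n \<and> left_prolongable L v}) / real (complexity L n))
        \<longlonglongrightarrow> 1) \<and>
     ((\<lambda>n. real (card {v\<in>L. length v = n \<and> right_prolongable L v}) / real (complexity L n))
        \<longlonglongrightarrow> 1)"

end

theory Submission
  imports Defs
begin

text \<open>Every word of the language extends to the right, since it sits inside an infinite sequence,
  so the complexity is nondecreasing and, being unbounded, tends to infinity. By density of the
  orbit of F, every word occurs in some element of F (its cylinder is open and meets the orbit).
  A word that does not extend to the left cannot occur at a positive position, so it is a prefix
  of an element of F. Hence at most card F words of each length fail to be left-prolongable, a bounded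
  deficit that becomes negligible relative to the complexity.\<close>

lemma subshift_in_alphabet:
  assumes "subshift A Sig" "\<omega> \<in> Sig"
  shows "\<omega> k \<in> A"
  using assms unfolding subshift_def seq_top_def by (auto simp: PiE_iff)

lemma funpow_shift_apply: "(shift ^^ m) \<omega> k = \<omega> (m + k)"
  by (induction m arbitrary: k) (auto simp: shift_def)

lemma subshift_funpow_shift:
  assumes "subshift A Sig" "\<omega> \<in> Sig"
  shows "(shift ^^ m) \<omega> \<in> Sig"
  using assms by (induction m) (auto simp: subshift_def)

lemma language_in_lists:
  assumes "subshift A Sig" "w \<in> language Sig"
  shows "set w \<subseteq> A"
proof -
  obtain \<omega> i where "\<omega> \<in> Sig" "w = map \<omega> [i..<i + length w]"
    using assms(2) by (auto simp: language_def)
  then show ?thesis using subshift_in_alphabet[OF assms(1)] by (metis ex_map_conv subsetI)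
qed

lemma finite_language_length:
  assumes "subshift A Sig"
  shows "finite {w \<in> language Sig. length w = n}"
proof (rule finite_subset)
  show "{w \<in> language Sig. length w = n} \<subseteq> {w. set w \<subseteq> A \<and> length w = n}"
    using language_in_lists[OF assms] by blast
  show "finite {w. set w \<subseteq> A \<and> length w = n}"
    using assms finite_lists_length_eq unfolding subshift_def by blast
qed

lemma right_prolongable_language:
  assumes "w \<in> language Sig"
  shows "right_prolongable (language Sig) w"
proof -
  obtain \<omega> i where "\<omega> \<in> Sig" "w = map \<omega> [i..<i + length w]"
    using assms by (auto simp: language_def)
  then have "w @ [\<omega> (i + length w)] = map \<omega> [i..<i + length (w @ [\<omega> (i + length w)])]"
    by simp
  with \<open>\<omega> \<in> Sig\<close> show ?thesis
    unfolding right_prolongable_def language_def by blast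
qed

lemma complexity_language_Suc_mono:
  assumes "subshift A Sig"
  shows "complexity (language Sig) n \<le> complexity (language Sig) (Suc n)"
proof -
  let ?W = "\<lambda>n. {w \<in> language Sig. length w = n}"
  have "?W n \<subseteq> butlast ` ?W (Suc n)"
  proof
    fix w assume "w \<in> ?W n"
    then obtain a where "w @ [a] \<in> language Sig" "length w = n"
      using right_prolongable_language unfolding right_prolongable_def by blast
    then show "w \<in> butlast ` ?W (Suc n)"
      by (metis (mono_tags, lifting) butlast_snoc image_eqI length_append_singleton mem_Collect_eq)
  qed
  then have "card (?W n) \<le> card (butlast ` ?W (Suc n))"
    by (intro card_mono finite_imageI finite_language_length[OF assms])
  also have "\<dots> \<le> card (?W (Suc n))"
    by (rule card_image_le[OF finite_language_length[OF assms]])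
  finally show ?thesis unfolding complexity_def .
qed

lemma openin_cylinder:
  assumes "set w \<subseteq> A"
  shows "openin (seq_top A) {x \<in> topspace (seq_top A). \<forall>k<length w. x (i + k) = w ! k}"
proof -
  have "{x \<in> topspace (seq_top A). \<forall>k<length w. x (i + k) = w ! k}
      = (\<Inter>k\<in>{..<length w}. {x \<in> topspace (seq_top A). x (i + k) \<in> {w ! k}}) \<inter> topspace (seq_top A)"
    by auto
  also have "openin (seq_top A) \<dots>"
  proof (rule openin_INT)
    fix k assume "k \<in> {..<length w}"
    then have "w ! k \<in> A" using assms nth_mem by blast
    then show "openin (seq_top A) {x \<in> topspace (seq_top A). x (i + k) \<in> {w ! k}}"
      unfolding seq_top_def
      by (intro openin_continuous_map_preimage[OF continuous_map_product_projection]) auto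
  qed simp
  finally show ?thesis .
qed

lemma language_occurs_in_generator:
  assumes S: "subshift A Sig" and D: "has_dense_orbit A Sig F" and w: "w \<in> language Sig"
  shows "\<exists>f\<in>F. \<exists>m. w = map f [m..<m + length w]"
proof -
  let ?T = "subtopology (seq_top A) Sig"
  define C where "C = {x \<in> topspace (seq_top A). \<forall>k<length w. x k = w ! k}"
  obtain \<omega> i where \<omega>: "\<omega> \<in> Sig" and wi: "w = map \<omega> [i..<i + length w]"
    using w by (auto simp: language_def)
  have "openin ?T (C \<inter> Sig)"
    unfolding openin_subtopology C_def
    using openin_cylinder[OF language_in_lists[OF S w], of 0] by auto
  moreover have "(shift ^^ i) \<omega> \<in> C \<inter> Sig"
    using S \<omega> subshift_funpow_shift[OF S \<omega>] unfolding C_def subshift_def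
    by (subst wi) (auto simp: funpow_shift_apply)
  moreover have "(shift ^^ i) \<omega> \<in> ?T closure_of orbit_set F"
    using D subshift_funpow_shift[OF S \<omega>] by (simp add: has_dense_orbit_def)
  ultimately obtain y where "y \<in> orbit_set F" "y \<in> C"
    unfolding in_closure_of by blast
  then obtain f m where "f \<in> F" "\<forall>k<length w. f (m + k) = w ! k"
    by (auto simp: orbit_set_def C_def funpow_shift_apply)
  then have "w = map f [m..<m + length w]"
    by (intro nth_equalityI) auto
  with \<open>f \<in> F\<close> show ?thesis by blast
qed

lemma not_left_prolongable_prefix_of_generator:
  assumes S: "subshift A Sig" and D: "has_dense_orbit A Sig F"
    and w: "w \<in> language Sig" and nl: "\<not> left_prolongable (language Sig) w"
  shows "w \<in> (\<lambda>f. map f [0..<length w]) ` F"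
proof -
  obtain f m where f: "f \<in> F" and wf: "w = map f [m..<m + length w]"
    using language_occurs_in_generator[OF S D w] by blast
  have "f \<in> Sig" using f D by (auto simp: has_dense_orbit_def)
  have "m = 0"
  proof (rule ccontr)
    assume "m \<noteq> 0"
    then have "f (m - 1) # w = map f [m - 1..<m - 1 + length (f (m - 1) # w)]"
      by (subst wf) (simp add: upt_rec)
    with \<open>f \<in> Sig\<close> have "f (m - 1) # w \<in> language Sig"
      unfolding language_def mem_Collect_eq by (intro bexI[of _ f] exI[of _ "m - 1"])
    with nl show False unfolding left_prolongable_def by blast
  qed
  with wf f show ?thesis by auto
qed

lemma complexity_le_card_left_prolongable_add_card:
  assumes S: "subshift A Sig" and "finite F" and D: "has_dense_orbit A Sig F"
  shows "complexity (language Sig) n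
           \<le> card {v \<in> language Sig. length v = n \<and> left_prolongable (language Sig) v} + card F"
proof -
  let ?G = "{v \<in> language Sig. length v = n \<and> left_prolongable (language Sig) v}"
  let ?N = "{v \<in> language Sig. length v = n \<and> \<not> left_prolongable (language Sig) v}"
  have "?N \<subseteq> (\<lambda>f. map f [0..<n]) ` F"
    using not_left_prolongable_prefix_of_generator[OF S D] by auto
  then have "card ?N \<le> card F"
    using surj_card_le[OF \<open>finite F\<close>] by blast
  moreover have "complexity (language Sig) n = card (?G \<union> ?N)"
    unfolding complexity_def by (rule arg_cong[where f = card]) blast
  moreover have "finite ?G" "finite ?N"
    by (auto intro: finite_subset[OF _ finite_language_length[OF S, of n]])
  ultimately show ?thesis
    by (simp add: card_Un_disjoint disjoint_iff)
qed

lemma incseq_unbounded_tendsto_at_top: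
  fixes p :: "nat \<Rightarrow> nat"
  assumes "incseq p" and "\<forall>B. \<exists>n. p n > B"
  shows "filterlim (\<lambda>n. real (p n)) at_top sequentially"
  unfolding filterlim_at_top eventually_sequentially
proof
  fix Z :: real
  obtain m where "nat \<lceil>Z\<rceil> < p m" using assms(2) by blast
  then have "Z \<le> real (p n)" if "m \<le> n" for n
    using incseqD[OF assms(1) that] real_nat_ceiling_ge[of Z] by linarith
  then show "\<exists>m. \<forall>n\<ge>m. Z \<le> real (p n)" by blast
qed

lemma ratio_tendsto_1_bounded_deficit:
  fixes p q :: "nat \<Rightarrow> real" and c :: real
  assumes "filterlim p at_top sequentially"
    and "\<And>n. q n \<le> p n" and "\<And>n. p n - c \<le> q n"
  shows "(\<lambda>n. q n / p n) \<longlonglongrightarrow> 1"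
proof (rule tendsto_sandwich)
  have pos: "eventually (\<lambda>n. 0 < p n) sequentially"
    using assms(1) by (simp add: filterlim_at_top_dense)
  show "eventually (\<lambda>n. q n / p n \<le> 1) sequentially"
    by (rule eventually_mono[OF pos]) (simp add: assms(2))
  show "eventually (\<lambda>n. 1 - c / p n \<le> q n / p n) sequentially"
  proof (rule eventually_mono[OF pos])
    fix n assume "0 < p n"
    then have "1 - c / p n = (p n - c) / p n" by (simp add: field_simps)
    also have "\<dots> \<le> q n / p n" using \<open>0 < p n\<close> assms(3) by (simp add: divide_right_mono)
    finally show "1 - c / p n \<le> q n / p n" .
  qed
  have "(\<lambda>n. c / p n) \<longlonglongrightarrow> 0"
    by (rule tendsto_divide_0[OF tendsto_const filterlim_at_top_imp_at_infinity[OF assms(1)]])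
  from tendsto_diff[OF tendsto_const this]
  show "(\<lambda>n. 1 - c / p n) \<longlonglongrightarrow> 1" by simp
qed (rule tendsto_const)

theorem proposition2p14:
  fixes A :: "'a set" and Sig F :: "(nat \<Rightarrow> 'a) set"
  assumes "subshift A Sig"
    and "finite F" and "has_dense_orbit A Sig F"
    and "\<forall>B. \<exists>n. complexity (language Sig) n > B"
  shows "almost_prolongable (language Sig)"
proof -
  let ?L = "language Sig"
  let ?p = "\<lambda>n. real (complexity ?L n)"
  have "incseq (complexity ?L)"
    using complexity_language_Suc_mono[OF assms(1)] by (rule incseq_SucI)
  then have p: "filterlim ?p at_top sequentially"
    using assms(4) by (rule incseq_unbounded_tendsto_at_top)
  have "(\<lambda>n. real (card {v \<in> ?L. length v = n \<and> left_prolongable ?L v}) / ?p n) \<longlonglongrightarrow> 1"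
  proof (rule ratio_tendsto_1_bounded_deficit[OF p])
    show "real (card {v \<in> ?L. length v = n \<and> left_prolongable ?L v}) \<le> ?p n" for n
      unfolding complexity_def
      by (simp add: card_mono[OF finite_language_length[OF assms(1)]] subset_iff)
    show "?p n - card F \<le> real (card {v \<in> ?L. length v = n \<and> left_prolongable ?L v})" for n
      using complexity_le_card_left_prolongable_add_card[OF assms(1-3), of n] by linarith
  qed
  moreover have "(\<lambda>n. real (card {v \<in> ?L. length v = n \<and> right_prolongable ?L v}) / ?p n) \<longlonglongrightarrow> 1"
  proof (rule ratio_tendsto_1_bounded_deficit[OF p, where c = 0])
    have "{v \<in> ?L. length v = n \<and> right_prolongable ?L v} = {v \<in> ?L. length v = n}" for n
      using right_prolongable_language by blast
    then show "real (card {v \<in> ?L. length v = n \<and> right_prolongable ?L v}) \<le> ?p n"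
      and "?p n - 0 \<le> real (card {v \<in> ?L. length v = n \<and> right_prolongable ?L v})" for n
      by (simp_all add: complexity_def)
  qed
  ultimately show ?thesis unfolding almost_prolongable_def ..
qed

end
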